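(* For every $\beta=(\beta_1,\dots,\beta_k)\in\mathbb P^k$ with $k\ge 1$, and for $t\ge0$ and $\mathrm{Re}(z)<0$, $$\phi\tbinom{0^k}{\beta}=\sum_{n=0}^\infty\Bigg(\sum_{(s_1,\dots,s_k)\in \mathrm{WC}_k(n)}\Big(\sum_{i=0}^{s_1}\frac{b_{s_1-i}}{i!(s_1-i)!}t^i\Big)\frac{b_{s_2}\cdots b_{s_k}}{s_2!\cdots s_k!}(\beta_1+\cdots+\beta_k)^{s_1-1}(\beta_2+\cdots+\beta_k)^{s_2-1}\cdots\beta_k^{s_k-1}\Bigg)z^{n-k}.$$
   Context: $\mathbb P$ denotes the positive integers. For $\beta\in\mathbb P^k$, real $t\ge0$ and complex $z$ with $\mathrm{Re}(z)<0$, define $$\phi\tbinom{0^k}{\beta}=\sum_{0<i_1<\cdots<i_k}e^{(i_1+t)\beta_1z}\cdots e^{(i_k+t)\beta_kz}.$$ This series is absolutely convergent and is identified with its Laurent expansion in $z$. $\mathrm{WC}_k(n)$ denotes the set of sequences $(s_1,\dots,s_k)$ of nonnegative integers with $s_1+\dots+s_k=n$. The numbers $b_s$ are defined by $b_0=-1$, $b_1=-\tfrac12$ and $b_s=-B_s$ for $s\ge2$. Here $B_s$ are the Bernoulli numbers given by $z/(e^z-1)=\sum_{s\ge0}B_sz^s/s!$. Equivalently, $e^z/(1-e^z)=\sum_{s\ge0}\frac{b_s}{s!}z^{s-1}$. *)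

theory Defs
  imports "HOL-Analysis.Analysis" "HOL-Computational_Algebra.Formal_Power_Series"
begin

definition bernoulli_num :: "nat \<Rightarrow> real" where
  "bernoulli_num s = fps_nth (fps_X / (fps_exp 1 - 1)) s * fact s"

definition bnum :: "nat \<Rightarrow> real" where
  "bnum s = (if s = 0 then -1 else if s = 1 then -1/2 else - bernoulli_num s)"

definition incr_tuples :: "nat \<Rightarrow> nat list set" where
  "incr_tuples k = {i. length i = k \<and> sorted_wrt (<) i \<and> (\<forall>x\<in>set i. 0 < x)}"

definition phi :: "nat list \<Rightarrow> real \<Rightarrow> complex \<Rightarrow> complex" where
  "phi \<beta> t z = (\<Sum>\<^sub>\<infinity>i\<in>incr_tuples (length \<beta>).
      \<Prod>j<length \<beta>. exp (complex_of_real ((real (i ! j) + t) * real (\<beta> ! j)) * z))"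

definition WC :: "nat \<Rightarrow> nat \<Rightarrow> nat list set" where
  "WC k n = {s. length s = k \<and> sum_list s = n}"

text \<open>The coefficient of z^(n-k) in the Laurent expansion.\<close>
definition coef :: "nat list \<Rightarrow> real \<Rightarrow> nat \<Rightarrow> real" where
  "coef \<beta> t n = (let k = length \<beta> in
     \<Sum>s\<in>WC k n.
       (\<Sum>i=0..s!0. bnum (s!0 - i) / (fact i * fact (s!0 - i)) * t ^ i)
       * (\<Prod>j\<in>{1..<k}. bnum (s!j) / fact (s!j))
       * (\<Prod>j<k. (real (\<Sum>l\<in>{j..<k}. \<beta> ! l)) powi (int (s!j) - 1)))"

end

theory Submission
  imports Defs "HOL-Complex_Analysis.Laurent_Convergence"
begin

text \<open>
  Writing i_j = m_1 + ... + m_j with gaps m_l >= 1 turns phi into a product of geometric series,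
  phi = e^(t B_1 z) * prod_l e^(B_l z) / (1 - e^(B_l z)) with the tail sums B_l = beta_l + ... + beta_k.
  Since w e^w / (1 - e^w) = sum_s b_s w^s / s!, the function z^k phi is a product of k power series
  in z with positive radius of convergence (the first one times the series of e^(t B_1 z)), and the
  coefficients of such a product are sums over weak compositions.
\<close>

lemma has_fps_expansion_imp_eventually_sums:
  assumes "f has_fps_expansion F"
  shows "eventually (\<lambda>z. (\<lambda>n. fps_nth F n * z ^ n) sums f z) (nhds 0)"
proof -
  have "eventually (\<lambda>z. z \<in> eball 0 (fps_conv_radius F)) (nhds 0)"
    using assms by (intro eventually_nhds_in_open) (auto simp: has_fps_expansion_def zero_ereal_def)
  moreover have "eventually (\<lambda>z. eval_fps F z = f z) (nhds 0)"
    using assms by (simp add: has_fps_expansion_def)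
  ultimately show ?thesis
    by eventually_elim (metis sums_eval_fps in_eball_iff dist_0_norm)
qed

lemma sums_mult_power_int_shift:
  fixes z :: "'a::{real_normed_field}"
  assumes "z \<noteq> 0" "(\<lambda>n. a n * z ^ n) sums (z ^ k * s)"
  shows "(\<lambda>n. a n * z powi (int n - int k)) sums s"
proof -
  have "(\<lambda>n. z powi (- int k) * (a n * z ^ n)) sums (z powi (- int k) * (z ^ k * s))"
    using assms(2) by (rule sums_mult)
  moreover have "z powi (- int k) * (a n * z ^ n) = a n * z powi (int n - int k)" for n
    using assms(1) by (simp add: power_int_diff power_int_minus field_simps)
  moreover have "z powi (- int k) * (z ^ k * s) = s"
    using assms(1) by (simp add: power_int_minus field_simps)
  ultimately show ?thesis
    by simp
qed

lemma subdegree_fps_exp_1_minus_1: "subdegree (fps_exp (1::'a::field_char_0) - 1) = 1"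
  by (rule subdegreeI) auto

lemma fps_exp_1_minus_1_nonzero: "fps_exp (1::'a::field_char_0) - 1 \<noteq> 0"
  using subdegree_fps_exp_1_minus_1[where 'a='a] by auto

lemma bernoulli_fps_times:
  "fps_X / (fps_exp 1 - 1) * (fps_exp 1 - 1) = (fps_X :: 'a::field_char_0 fps)"
  by (rule fps_times_divide_eq[OF fps_exp_1_minus_1_nonzero])
     (simp only: subdegree_fps_exp_1_minus_1 subdegree_fps_X order_refl)

lemma bernoulli_num_0: "bernoulli_num 0 = 1"
  and bernoulli_num_1: "bernoulli_num 1 = - 1/2"
proof -
  let ?G = "fps_X / (fps_exp 1 - 1) :: real fps"
  have "fps_nth (?G * (fps_exp 1 - 1)) 1 = 1" "fps_nth (?G * (fps_exp 1 - 1)) 2 = 0"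
    by (simp_all add: bernoulli_fps_times)
  then show "bernoulli_num 0 = 1" "bernoulli_num 1 = - 1/2"
    by (simp_all add: bernoulli_num_def fps_mult_nth numeral_2_eq_2)
qed

definition bnum_fps :: "complex fps" where
  "bnum_fps = Abs_fps (\<lambda>s. of_real (bnum s / fact s))"

text \<open>b_s / s! are the coefficients of -X/(e^X - 1) - X = X e^X / (1 - e^X). The identity is proved
  over the reals, where bernoulli_num lives, and transferred coefficientwise.\<close>
lemma bnum_fps_times: "bnum_fps * (1 - fps_exp 1) = fps_X * fps_exp 1"
proof (rule fps_ext)
  fix n
  let ?Q = "- (fps_X / (fps_exp 1 - 1)) - fps_X :: real fps"
  have G: "fps_nth (fps_X / (fps_exp 1 - 1)) s = bernoulli_num s / fact s" for s :: nat
    by (simp add: bernoulli_num_def)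
  have Q: "fps_nth ?Q s = bnum s / fact s" for s
    by (simp add: bnum_def G bernoulli_num_0 bernoulli_num_1[unfolded One_nat_def])
  have "?Q * (1 - fps_exp 1) = fps_X / (fps_exp 1 - 1) * (fps_exp 1 - 1) - fps_X + fps_X * fps_exp 1"
    by (simp add: algebra_simps)
  then have "fps_nth (?Q * (1 - fps_exp 1)) n = fps_nth (fps_X * fps_exp 1) n"
    by (simp add: bernoulli_fps_times)
  then have "(\<Sum>i=0..n. bnum i / fact i * fps_nth (1 - fps_exp 1 :: real fps) (n - i))
      = fps_nth (fps_X * fps_exp 1 :: real fps) n"
    by (simp only: fps_mult_nth Q)
  then have "complex_of_real (\<Sum>i=0..n. bnum i / fact i * fps_nth (1 - fps_exp 1 :: real fps) (n - i))
      = of_real (fps_nth (fps_X * fps_exp 1 :: real fps) n)"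
    by (rule arg_cong)
  then show "fps_nth (bnum_fps * (1 - fps_exp 1)) n = fps_nth (fps_X * fps_exp 1) n"
    by (simp add: fps_mult_nth bnum_fps_def if_distrib[of complex_of_real] cong: if_cong)
qed

lemma has_fps_expansion_bnum_fps:
  "(\<lambda>w. if w = 0 then - 1 else w * exp w / (1 - exp w)) has_fps_expansion bnum_fps"
proof -
  have nonzero: "1 - fps_exp (1::complex) \<noteq> 0"
    using fps_exp_1_minus_1_nonzero[where 'a=complex] by (metis right_minus_eq)
  have subdegrees: "subdegree (1 - fps_exp (1::complex)) = 1" "subdegree (fps_X * fps_exp (1::complex)) = 1"
    by (rule subdegreeI; auto simp: fps_mult_nth)+
  have "(\<lambda>w::complex. if w = 0 then - 1 else w * exp w / (1 - exp w))
      has_fps_expansion fps_X * fps_exp 1 / (1 - fps_exp 1)"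
    by (rule has_fps_expansion_divide[OF has_fps_expansion_mult[OF has_fps_expansion_fps_X has_fps_expansion_exp1]
          has_fps_expansion_diff[OF has_fps_expansion_1 has_fps_expansion_exp1]])
       (use nonzero subdegrees in auto)
  also have "fps_X * fps_exp 1 / (1 - fps_exp 1) = bnum_fps"
    using fps_divide_times_eq[OF nonzero, of bnum_fps] by (simp add: bnum_fps_times)
  finally show ?thesis .
qed

text \<open>The value at 0 is the limit, so that the function agrees with its power series at 0 too.\<close>
definition bernoulli_gf :: "real \<Rightarrow> complex \<Rightarrow> complex" where
  "bernoulli_gf B z =
     (if z = 0 then - 1 / of_real B else z * exp (of_real B * z) / (1 - exp (of_real B * z)))"

definition bernoulli_gf_fps :: "real \<Rightarrow> complex fps" where
  "bernoulli_gf_fps B = Abs_fps (\<lambda>s. of_real (bnum s / fact s * B powi (int s - 1)))"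

lemma has_fps_expansion_bernoulli_gf:
  assumes "B \<noteq> 0"
  shows "bernoulli_gf B has_fps_expansion bernoulli_gf_fps B"
proof -
  define b where "b w = (if w = 0 then - 1 else w * exp w / (1 - exp w))" for w :: complex
  have "(\<lambda>z. of_real (1 / B) * (b \<circ> (\<lambda>z. of_real B * z)) z)
      has_fps_expansion fps_const (of_real (1 / B)) * (bnum_fps oo (fps_const (of_real B) * fps_X))"
    unfolding b_def by (intro fps_expansion_intros has_fps_expansion_bnum_fps) auto
  also have "(\<lambda>z. of_real (1 / B) * (b \<circ> (\<lambda>z. of_real B * z)) z) = bernoulli_gf B"
    using assms by (auto simp: fun_eq_iff b_def bernoulli_gf_def)
  also have "fps_const (of_real (1 / B)) * (bnum_fps oo (fps_const (of_real B) * fps_X))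
      = bernoulli_gf_fps B"
    unfolding fps_compose_linear bernoulli_gf_fps_def
    using assms by (simp add: fps_eq_iff bnum_fps_def power_int_diff field_simps)
  finally show ?thesis .
qed

lemma bernoulli_gf_nonzero:
  "z \<noteq> 0 \<Longrightarrow> bernoulli_gf B z = z * (exp (of_real B * z) / (1 - exp (of_real B * z)))"
  by (simp add: bernoulli_gf_def)

lemma fps_nth_exp_times_bernoulli_gf_fps:
  assumes "B \<noteq> 0"
  shows "fps_nth (fps_exp (of_real (t * B)) * bernoulli_gf_fps B) a =
    of_real ((\<Sum>i=0..a. bnum (a - i) / (fact i * fact (a - i)) * t ^ i) * B powi (int a - 1))"
proof -
  have "fps_nth (fps_exp (of_real (t * B)) * bernoulli_gf_fps B) a
      = of_real (\<Sum>i=0..a. (t * B) ^ i / fact i * (bnum (a - i) / fact (a - i) * B powi (int (a - i) - 1)))"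
    by (simp add: fps_mult_nth bernoulli_gf_fps_def)
  also have "(\<Sum>i=0..a. (t * B) ^ i / fact i * (bnum (a - i) / fact (a - i) * B powi (int (a - i) - 1)))
      = (\<Sum>i=0..a. bnum (a - i) / (fact i * fact (a - i)) * t ^ i * B powi (int a - 1))"
  proof (rule sum.cong)
    fix i assume "i \<in> {0..a}"
    then have "B powi (int a - 1) = B powi (int i + (int (a - i) - 1))"
      by (simp add: of_nat_diff)
    also have "\<dots> = B ^ i * B powi (int (a - i) - 1)"
      using assms by (simp add: power_int_add)
    finally show "(t * B) ^ i / fact i * (bnum (a - i) / fact (a - i) * B powi (int (a - i) - 1))
        = bnum (a - i) / (fact i * fact (a - i)) * t ^ i * B powi (int a - 1)"
      by (simp add: power_mult_distrib field_simps)
  qed simp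
  finally show ?thesis
    by (simp only: sum_distrib_right)
qed

lemma finite_WC: "finite (WC k n)"
proof (rule finite_subset)
  show "WC k n \<subseteq> {xs. set xs \<subseteq> {..n} \<and> length xs = k}"
    by (auto simp: WC_def member_le_sum_list)
qed (simp add: finite_lists_length_eq)

lemma sum_WC_Suc:
  "(\<Sum>s\<in>WC (Suc k) n. h s) = (\<Sum>i=0..n. \<Sum>s\<in>WC k (n - i). h (i # s))"
proof -
  have "(\<Sum>i=0..n. \<Sum>s\<in>WC k (n - i). h (i # s)) = (\<Sum>(i, s)\<in>Sigma {0..n} (\<lambda>i. WC k (n - i)). h (i # s))"
    by (simp add: sum.Sigma finite_WC)
  also have "\<dots> = (\<Sum>s\<in>WC (Suc k) n. h s)"
  proof (rule sum.reindex_bij_witness[where i = "\<lambda>s. (hd s, tl s)" and j = "\<lambda>(i, s). i # s"])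
    fix s assume s: "s \<in> WC (Suc k) n"
    then obtain i s' where "s = i # s'"
      by (cases s) (auto simp: WC_def)
    with s show "(hd s, tl s) \<in> Sigma {0..n} (\<lambda>i. WC k (n - i))" "(case (hd s, tl s) of (i, s) \<Rightarrow> i # s) = s"
      by (auto simp: WC_def)
  qed (auto simp: WC_def)
  finally show ?thesis ..
qed

lemma fps_nth_prod_eq_sum_WC:
  fixes F :: "nat \<Rightarrow> 'a::comm_semiring_1 fps"
  shows "fps_nth (\<Prod>j<k. F j) n = (\<Sum>s\<in>WC k n. \<Prod>j<k. fps_nth (F j) (s ! j))"
proof (induction k arbitrary: F n)
  case 0
  have "WC 0 n = (if n = 0 then {[]} else {})"
    by (auto simp: WC_def)
  then show ?case
    by simp
next
  case (Suc k)
  have "fps_nth (\<Prod>j<Suc k. F j) n = fps_nth (F 0 * (\<Prod>j<k. F (Suc j))) n"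
    by (simp only: prod.lessThan_Suc_shift)
  also have "\<dots> = (\<Sum>i=0..n. fps_nth (F 0) i * (\<Sum>s\<in>WC k (n - i). \<Prod>j<k. fps_nth (F (Suc j)) (s ! j)))"
    by (simp add: fps_mult_nth Suc.IH)
  also have "\<dots> = (\<Sum>i=0..n. \<Sum>s\<in>WC k (n - i). \<Prod>j<Suc k. fps_nth (F j) ((i # s) ! j))"
    by (simp del: prod.lessThan_Suc add: sum_distrib_left prod.lessThan_Suc_shift)
  also have "\<dots> = (\<Sum>s\<in>WC (Suc k) n. \<Prod>j<Suc k. fps_nth (F j) (s ! j))"
    by (rule sum_WC_Suc[symmetric])
  finally show ?case .
qed

lemma sum_triangle_swap:
  fixes k :: nat
  shows "(\<Sum>j<k. \<Sum>l\<le>j. f l j) = (\<Sum>l<k. \<Sum>j\<in>{l..<k}. f l j :: 'a::comm_monoid_add)"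
proof (induction k)
  case (Suc k)
  have "(\<Sum>l<Suc k. \<Sum>j\<in>{l..<Suc k}. f l j) = (\<Sum>l<Suc k. (\<Sum>j\<in>{l..<k}. f l j) + f l k)"
    by (intro sum.cong) auto
  with Suc show ?case
    by (simp add: sum.distrib ac_simps flip: lessThan_Suc_atMost)
qed simp

definition prefix_sums :: "nat \<Rightarrow> (nat \<Rightarrow> nat) \<Rightarrow> nat list" where
  "prefix_sums k m = map (\<lambda>j. \<Sum>l\<le>j. m l) [0..<k]"

definition gaps :: "nat \<Rightarrow> nat list \<Rightarrow> nat \<Rightarrow> nat" where
  "gaps k i = restrict (\<lambda>j. if j = 0 then i ! 0 else i ! j - i ! (j - 1)) {..<k}"

lemma nth_prefix_sums: "j < k \<Longrightarrow> prefix_sums k m ! j = (\<Sum>l\<le>j. m l)"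
  by (simp add: prefix_sums_def)

lemma prefix_sums_in_incr_tuples:
  assumes m: "m \<in> PiE {..<k} (\<lambda>_. {1..})"
  shows "prefix_sums k m \<in> incr_tuples k"
proof -
  have pos: "0 < m j" if "j < k" for j
    using m that by (auto simp: PiE_def Pi_def)
  have "(\<Sum>l\<le>i. m l) < (\<Sum>l\<le>j. m l)" if "i < j" "j < k" for i j
    using that pos by (intro sum_strict_mono2[of "{..j}" "{..i}" j]) auto
  then have "sorted_wrt (<) (prefix_sums k m)"
    by (auto simp: sorted_wrt_iff_nth_less prefix_sums_def)
  moreover have "0 < (\<Sum>l\<le>j. m l)" if "j < k" for j
    using pos[OF that] member_le_sum[of j "{..j}" m] by simp
  ultimately show ?thesis
    by (auto simp: incr_tuples_def prefix_sums_def)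
qed

lemma incr_tuplesD:
  assumes "i \<in> incr_tuples k"
  shows "length i = k" "\<And>a b. a < b \<Longrightarrow> b < k \<Longrightarrow> i ! a < i ! b" "\<And>a. a < k \<Longrightarrow> 0 < i ! a"
  using assms by (auto simp: incr_tuples_def sorted_wrt_iff_nth_less)

lemma gaps_in_PiE:
  assumes "i \<in> incr_tuples k"
  shows "gaps k i \<in> PiE {..<k} (\<lambda>_. {1..})"
proof -
  note i = incr_tuplesD[OF assms]
  have "1 \<le> gaps k i j" if "j < k" for j
  proof (cases j)
    case 0
    then show ?thesis using that i(3)[of 0] by (simp add: gaps_def)
  next
    case (Suc j')
    then show ?thesis using that i(2)[of j' j] by (simp add: gaps_def)
  qed
  then show ?thesis
    by (auto simp: gaps_def)
qed

lemma gaps_prefix_sums: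
  assumes "m \<in> PiE {..<k} (\<lambda>_. {1..})"
  shows "gaps k (prefix_sums k m) = m"
proof
  fix j
  show "gaps k (prefix_sums k m) j = m j"
  proof (cases "j < k")
    case True
    then show ?thesis
      by (cases j) (auto simp: gaps_def nth_prefix_sums)
  next
    case False
    then show ?thesis
      using assms by (auto simp: gaps_def PiE_def extensional_def)
  qed
qed

lemma prefix_sums_gaps:
  assumes i: "i \<in> incr_tuples k"
  shows "prefix_sums k (gaps k i) = i"
proof -
  have "(\<Sum>l\<le>j. gaps k i l) = i ! j" if "j < k" for j
    using that
  proof (induction j)
    case (Suc j)
    then show ?case
      using incr_tuplesD(2)[OF i, of j "Suc j"] by (simp add: gaps_def)
  qed (simp add: gaps_def)
  then show ?thesis
    using incr_tuplesD(1)[OF i] by (intro nth_equalityI) (auto simp: prefix_sums_def)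
qed

lemma bij_betw_prefix_sums:
  "bij_betw (prefix_sums k) (PiE {..<k} (\<lambda>_. {1..})) (incr_tuples k)"
proof (rule bij_betw_byWitness[where f' = "gaps k"])
  show "\<forall>m\<in>PiE {..<k} (\<lambda>_. {1..}). gaps k (prefix_sums k m) = m"
    using gaps_prefix_sums by blast
  show "\<forall>i\<in>incr_tuples k. prefix_sums k (gaps k i) = i"
    using prefix_sums_gaps by blast
  show "prefix_sums k ` PiE {..<k} (\<lambda>_. {1..}) \<subseteq> incr_tuples k"
    using prefix_sums_in_incr_tuples by blast
  show "gaps k ` incr_tuples k \<subseteq> PiE {..<k} (\<lambda>_. {1..})"
    using gaps_in_PiE by blast
qed

definition tail_sum :: "nat list \<Rightarrow> nat \<Rightarrow> real" where
  "tail_sum \<beta> l = real (\<Sum>j\<in>{l..<length \<beta>}. \<beta> ! j)"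

lemma tail_sum_pos:
  assumes "\<forall>b\<in>set \<beta>. 0 < b" "l < length \<beta>"
  shows "0 < tail_sum \<beta> l"
proof -
  have "\<beta> ! l \<le> (\<Sum>j\<in>{l..<length \<beta>}. \<beta> ! j)"
    by (rule member_le_sum) (use assms in auto)
  with assms show ?thesis
    unfolding tail_sum_def by (metis gr0I le_zero_eq nth_mem of_nat_0_less_iff)
qed

lemma sum_prefix_sums_times:
  "(\<Sum>j<length \<beta>. (real (prefix_sums (length \<beta>) m ! j) + t) * real (\<beta> ! j))
     = t * tail_sum \<beta> 0 + (\<Sum>l<length \<beta>. real (m l) * tail_sum \<beta> l)"
proof -
  have "(\<Sum>j<length \<beta>. real (prefix_sums (length \<beta>) m ! j) * real (\<beta> ! j))
      = (\<Sum>j<length \<beta>. \<Sum>l\<le>j. real (m l) * real (\<beta> ! j))"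
    by (simp add: nth_prefix_sums sum_distrib_right)
  also have "\<dots> = (\<Sum>l<length \<beta>. real (m l) * tail_sum \<beta> l)"
    by (simp add: sum_triangle_swap tail_sum_def sum_distrib_left)
  finally show ?thesis
    by (simp add: distrib_right sum.distrib sum_distrib_left tail_sum_def atLeast0LessThan)
qed

lemma phi_eq_prod:
  assumes pos: "\<forall>b\<in>set \<beta>. 0 < b" and z: "Re z < 0"
  shows "phi \<beta> t z = exp (of_real (t * tail_sum \<beta> 0) * z) *
           (\<Prod>l<length \<beta>. exp (of_real (tail_sum \<beta> l) * z) / (1 - exp (of_real (tail_sum \<beta> l) * z)))"
proof -
  define k where "k = length \<beta>"
  define w where "w l = exp (of_real (tail_sum \<beta> l) * z)" for l
  define c where "c = exp (of_real (t * tail_sum \<beta> 0) * z)"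
  have norm_w: "norm (w l) < 1" if "l < k" for l
    using tail_sum_pos[OF pos, of l] that z by (simp add: w_def k_def mult_pos_neg)
  have summand: "(\<Prod>j<k. exp (of_real ((real (prefix_sums k m ! j) + t) * real (\<beta> ! j)) * z))
      = c * (\<Prod>l<k. w l ^ m l)" for m
  proof -
    have "(\<Prod>j<k. exp (of_real ((real (prefix_sums k m ! j) + t) * real (\<beta> ! j)) * z))
        = exp (of_real (\<Sum>j<k. (real (prefix_sums k m ! j) + t) * real (\<beta> ! j)) * z)"
      by (simp add: exp_sum sum_distrib_right)
    also have "\<dots> = exp (of_real (t * tail_sum \<beta> 0 + (\<Sum>l<k. real (m l) * tail_sum \<beta> l)) * z)"
      unfolding k_def sum_prefix_sums_times ..
    also have "\<dots> = exp (of_real (t * tail_sum \<beta> 0) * z + (\<Sum>l<k. of_nat (m l) * (of_real (tail_sum \<beta> l) * z)))"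
      by (simp add: distrib_right sum_distrib_right mult.assoc)
    finally show ?thesis
      by (simp add: c_def w_def exp_add exp_sum exp_of_nat_mult)
  qed
  have "phi \<beta> t z = (\<Sum>\<^sub>\<infinity>i\<in>incr_tuples k. \<Prod>j<k. exp (of_real ((real (i ! j) + t) * real (\<beta> ! j)) * z))"
    by (simp add: phi_def k_def)
  also have "\<dots> = (\<Sum>\<^sub>\<infinity>m\<in>PiE {..<k} (\<lambda>_. {1..}).
      \<Prod>j<k. exp (of_real ((real (prefix_sums k m ! j) + t) * real (\<beta> ! j)) * z))"
    by (rule infsum_reindex_bij_betw[OF bij_betw_prefix_sums, symmetric])
  also have "\<dots> = c * (\<Sum>\<^sub>\<infinity>m\<in>PiE {..<k} (\<lambda>_. {1..}). \<Prod>l<k. w l ^ m l)"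
    unfolding summand by (rule infsum_cmult_right')
  also have "(\<Sum>\<^sub>\<infinity>m\<in>PiE {..<k} (\<lambda>_. {1..}). \<Prod>l<k. w l ^ m l) = (\<Prod>l<k. \<Sum>\<^sub>\<infinity>n\<in>{1..}. w l ^ n)"
  proof (rule infsum_prod_PiE_abs)
    fix l assume "l \<in> {..<k}"
    then have "norm (norm (w l)) < 1"
      using norm_w by simp
    from has_sum_geometric_from_1[OF this] show "(\<lambda>n. norm (w l ^ n)) summable_on {1..}"
      by (auto simp: norm_power summable_on_def)
  qed simp
  also have "\<dots> = (\<Prod>l<k. w l / (1 - w l))"
    by (intro prod.cong refl infsumI has_sum_geometric_from_1) (use norm_w in auto)
  finally show ?thesis
    by (simp add: c_def w_def k_def)
qed

lemma exp_times_prod_bernoulli_gf_fps: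
  assumes pos: "\<forall>b\<in>set \<beta>. 0 < b" and nonempty: "\<beta> \<noteq> []"
  shows "fps_exp (of_real (t * tail_sum \<beta> 0)) * (\<Prod>l<length \<beta>. bernoulli_gf_fps (tail_sum \<beta> l))
           = Abs_fps (\<lambda>n. of_real (coef \<beta> t n))"
proof (rule fps_ext)
  fix n
  define k where "k = length \<beta>"
  define B where "B = tail_sum \<beta>"
  define S where "S a = (\<Sum>i=0..a. bnum (a - i) / (fact i * fact (a - i)) * t ^ i)" for a
  define H where "H l = (if l = 0 then fps_exp (of_real (t * B 0)) * bernoulli_gf_fps (B 0)
                         else bernoulli_gf_fps (B l))" for l
  define h where "h l a = (if l = 0 then S a * B 0 powi (int a - 1)
                           else bnum a / fact a * B l powi (int a - 1))" for l a
  have split_0: "{..<k} = insert 0 {1..<k}"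
    using nonempty by (auto simp: k_def)
  have "B 0 \<noteq> 0"
    using tail_sum_pos[OF pos, of 0] nonempty by (simp add: B_def)
  have nth_H: "fps_nth (H l) a = of_real (h l a)" for l a
  proof (cases "l = 0")
    case True
    then show ?thesis
      using fps_nth_exp_times_bernoulli_gf_fps[OF \<open>B 0 \<noteq> 0\<close>, of t a] by (simp add: H_def h_def S_def)
  qed (simp add: H_def h_def bernoulli_gf_fps_def)
  have h_prod: "(\<Prod>l<k. h l (s ! l)) = S (s ! 0) * (\<Prod>j\<in>{1..<k}. bnum (s ! j) / fact (s ! j))
                  * (\<Prod>j<k. B j powi (int (s ! j) - 1))" for s
  proof -
    have "(\<Prod>l\<in>{1..<k}. h l (s ! l))
        = (\<Prod>j\<in>{1..<k}. bnum (s ! j) / fact (s ! j)) * (\<Prod>j\<in>{1..<k}. B j powi (int (s ! j) - 1))"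
      by (simp only: prod.distrib[symmetric]) (rule prod.cong; simp add: h_def)
    then show ?thesis
      by (simp add: split_0 h_def ac_simps)
  qed
  have "fps_exp (of_real (t * B 0)) * (\<Prod>l<k. bernoulli_gf_fps (B l)) = (\<Prod>l<k. H l)"
    by (simp add: split_0 H_def mult.assoc)
  then have "fps_nth (fps_exp (of_real (t * B 0)) * (\<Prod>l<k. bernoulli_gf_fps (B l))) n
      = of_real (\<Sum>s\<in>WC k n. \<Prod>l<k. h l (s ! l))"
    by (simp add: fps_nth_prod_eq_sum_WC nth_H)
  also have "(\<Sum>s\<in>WC k n. \<Prod>l<k. h l (s ! l)) = coef \<beta> t n"
    unfolding h_prod by (simp add: coef_def Let_def S_def B_def tail_sum_def k_def)
  finally show "fps_nth (fps_exp (of_real (t * tail_sum \<beta> 0)) * (\<Prod>l<length \<beta>. bernoulli_gf_fps (tail_sum \<beta> l))) n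
      = fps_nth (Abs_fps (\<lambda>n. of_real (coef \<beta> t n))) n"
    by (simp only: B_def k_def fps_nth_Abs_fps)
qed

lemma has_fps_expansion_coef:
  assumes pos: "\<forall>b\<in>set \<beta>. 0 < b" and nonempty: "\<beta> \<noteq> []"
  shows "(\<lambda>z. exp (of_real (t * tail_sum \<beta> 0) * z) * (\<Prod>l<length \<beta>. bernoulli_gf (tail_sum \<beta> l) z))
           has_fps_expansion Abs_fps (\<lambda>n. of_real (coef \<beta> t n))"
proof -
  have "tail_sum \<beta> l \<noteq> 0" if "l < length \<beta>" for l
    using tail_sum_pos[OF pos that] by simp
  then have "(\<lambda>z. exp (of_real (t * tail_sum \<beta> 0) * z) * (\<Prod>l<length \<beta>. bernoulli_gf (tail_sum \<beta> l) z))
      has_fps_expansion fps_exp (of_real (t * tail_sum \<beta> 0)) * (\<Prod>l<length \<beta>. bernoulli_gf_fps (tail_sum \<beta> l))"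
    by (intro has_fps_expansion_mult has_fps_expansion_exp has_fps_expansion_prod has_fps_expansion_bernoulli_gf) auto
  then show ?thesis
    by (simp only: exp_times_prod_bernoulli_gf_fps[OF pos nonempty])
qed

lemma exp_times_prod_bernoulli_gf_eq_phi:
  assumes pos: "\<forall>b\<in>set \<beta>. 0 < b" and z: "Re z < 0"
  shows "exp (of_real (t * tail_sum \<beta> 0) * z) * (\<Prod>l<length \<beta>. bernoulli_gf (tail_sum \<beta> l) z)
           = z ^ length \<beta> * phi \<beta> t z"
proof -
  have "z \<noteq> 0"
    using z by auto
  then have "(\<Prod>l<length \<beta>. bernoulli_gf (tail_sum \<beta> l) z) = z ^ length \<beta> *
      (\<Prod>l<length \<beta>. exp (of_real (tail_sum \<beta> l) * z) / (1 - exp (of_real (tail_sum \<beta> l) * z)))"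
    by (simp only: bernoulli_gf_nonzero[OF \<open>z \<noteq> 0\<close>] prod.distrib prod_constant card_lessThan)
  then show ?thesis
    by (simp only: phi_eq_prod[OF pos z] mult.left_commute)
qed

theorem corollary3p8:
  fixes \<beta> :: "nat list" and t :: real
  assumes "length \<beta> \<ge> 1" and "\<forall>b\<in>set \<beta>. 0 < b" and "t \<ge> 0"
  shows "\<exists>r>0. \<forall>z::complex. Re z < 0 \<and> norm z < r \<longrightarrow>
           (\<lambda>n. complex_of_real (coef \<beta> t n) * z powi (int n - int (length \<beta>))) sums phi \<beta> t z"
proof -
  have "\<beta> \<noteq> []"
    using assms(1) by auto
  from has_fps_expansion_imp_eventually_sums[OF has_fps_expansion_coef[OF assms(2) this, of t]]
  obtain r where "r > 0" and r: "\<And>z. norm z < r \<Longrightarrow> (\<lambda>n. of_real (coef \<beta> t n) * z ^ n) sums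
      (exp (of_real (t * tail_sum \<beta> 0) * z) * (\<Prod>l<length \<beta>. bernoulli_gf (tail_sum \<beta> l) z))"
    by (auto simp: eventually_nhds_metric dist_norm)
  have "(\<lambda>n. of_real (coef \<beta> t n) * z powi (int n - int (length \<beta>))) sums phi \<beta> t z"
    if "Re z < 0" "norm z < r" for z :: complex
  proof (rule sums_mult_power_int_shift)
    show "z \<noteq> 0"
      using that by auto
    show "(\<lambda>n. of_real (coef \<beta> t n) * z ^ n) sums (z ^ length \<beta> * phi \<beta> t z)"
      using r[OF that(2)] unfolding exp_times_prod_bernoulli_gf_eq_phi[OF assms(2) that(1)] .
  qed
  with \<open>r > 0\<close> show ?thesis
    by blast
qed

end
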